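(* Let $A$ be a minimal $n$-state nondeterministic finite automaton accepting a non-empty language that is prefix-free, suffix-free, or infix-free. Then the minimal deterministic finite automaton accepting $L(A)$ has at least $n+1$ states.
   Context: NFAs have a single initial state and a transition function $\delta:Q\times\Sigma\to 2^Q$ that may map to the empty set (no sink state is needed or counted); DFAs are complete, so a sink state is counted. A minimal $n$-state NFA is an NFA with $n$ states such that no NFA with fewer states accepts the same language. With $\Sigma^+=\Sigma^*\setminus\{\lambda\}$: $L\subseteq\Sigma^*$ is prefix-free if $y\in L$ implies $yz\notin L$ for all $z\in\Sigma^+$; suffix-free if $y\in L$ implies $xy\notin L$ for all $x\in\Sigma^+$; infix-free if $y\in L$ implies $xyz\notin L$ for all $x,z\in\Sigma^*$ with $xz\in\Sigma^+$. *)

theory Defs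
  imports Main
begin

(* States are natural numbers; every finite automaton is isomorphic to one
   with nat states, so quantifying over such automata covers all automata. *)

record 'a nfa =
  nfa_alphabet :: "'a set"
  nfa_states :: "nat set"
  nfa_init :: nat
  nfa_delta :: "nat \<Rightarrow> 'a \<Rightarrow> nat set"
  nfa_final :: "nat set"

definition wf_nfa :: "'a nfa \<Rightarrow> bool" where
  "wf_nfa A \<longleftrightarrow> finite (nfa_alphabet A) \<and> finite (nfa_states A)
     \<and> nfa_init A \<in> nfa_states A \<and> nfa_final A \<subseteq> nfa_states A
     \<and> (\<forall>q\<in>nfa_states A. \<forall>a\<in>nfa_alphabet A. nfa_delta A q a \<subseteq> nfa_states A)"

fun nfa_run :: "'a nfa \<Rightarrow> nat set \<Rightarrow> 'a list \<Rightarrow> nat set" where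
  "nfa_run A S [] = S"
| "nfa_run A S (a # w) = nfa_run A (\<Union>q\<in>S. nfa_delta A q a) w"

definition nfa_lang :: "'a nfa \<Rightarrow> 'a list set" where
  "nfa_lang A = {w \<in> lists (nfa_alphabet A). nfa_run A {nfa_init A} w \<inter> nfa_final A \<noteq> {}}"

record 'a dfa =
  dfa_alphabet :: "'a set"
  dfa_states :: "nat set"
  dfa_init :: nat
  dfa_delta :: "nat \<Rightarrow> 'a \<Rightarrow> nat"
  dfa_final :: "nat set"

definition wf_dfa :: "'a dfa \<Rightarrow> bool" where
  "wf_dfa D \<longleftrightarrow> finite (dfa_alphabet D) \<and> finite (dfa_states D)
     \<and> dfa_init D \<in> dfa_states D \<and> dfa_final D \<subseteq> dfa_states D
     \<and> (\<forall>q\<in>dfa_states D. \<forall>a\<in>dfa_alphabet D. dfa_delta D q a \<in> dfa_states D)"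

fun dfa_run :: "'a dfa \<Rightarrow> nat \<Rightarrow> 'a list \<Rightarrow> nat" where
  "dfa_run D q [] = q"
| "dfa_run D q (a # w) = dfa_run D (dfa_delta D q a) w"

definition dfa_lang :: "'a dfa \<Rightarrow> 'a list set" where
  "dfa_lang D = {w \<in> lists (dfa_alphabet D). dfa_run D (dfa_init D) w \<in> dfa_final D}"

definition minimal_nfa :: "'a nfa \<Rightarrow> nat \<Rightarrow> bool" where
  "minimal_nfa A n \<longleftrightarrow> wf_nfa A \<and> card (nfa_states A) = n
     \<and> (\<forall>B. wf_nfa B \<and> nfa_alphabet B = nfa_alphabet A \<and> nfa_lang B = nfa_lang A
            \<longrightarrow> n \<le> card (nfa_states B))"

definition min_dfa_states :: "'a set \<Rightarrow> 'a list set \<Rightarrow> nat" where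
  "min_dfa_states \<Sigma> L = (LEAST k. \<exists>D. wf_dfa D \<and> dfa_alphabet D = \<Sigma> \<and> dfa_lang D = L
                                       \<and> card (dfa_states D) = k)"

definition prefix_free :: "'a list set \<Rightarrow> bool" where
  "prefix_free L \<longleftrightarrow> (\<forall>y z. y \<in> L \<and> z \<noteq> [] \<longrightarrow> y @ z \<notin> L)"

definition suffix_free :: "'a list set \<Rightarrow> bool" where
  "suffix_free L \<longleftrightarrow> (\<forall>x y. y \<in> L \<and> x \<noteq> [] \<longrightarrow> x @ y \<notin> L)"

definition infix_free :: "'a list set \<Rightarrow> bool" where
  "infix_free L \<longleftrightarrow> (\<forall>x y z. y \<in> L \<and> x @ z \<noteq> [] \<longrightarrow> x @ y @ z \<notin> L)"

end

theory Submission
  imports Defs "HOL-Library.Countable"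
begin

text \<open>
  An infix-free language is prefix-free, and a complete DFA for a nonempty prefix-free
  language has a dead state: the state reached by an accepted word followed by any letter.
  For a suffix-free language, the run on \<open>a, aa, aaa, \<dots>\<close> revisits a state, say
  \<open>p = \<delta>(a\<^sup>i) = \<delta>(a\<^sup>j)\<close> with \<open>i < j\<close>; then \<open>p\<close> is dead, for if
  \<open>a\<^sup>i z\<close> were accepted so would be its proper extension \<open>a\<^sup>j\<^sup>-\<^sup>i a\<^sup>i z\<close>.
  Deleting a dead state (other than the initial one) from a minimal DFA gives an NFA for
  the same language with one state fewer, which by minimality of the \<open>n\<close>-state NFA has at
  least \<open>n\<close> states.
\<close>

lemma dfa_run_append: "dfa_run D q (u @ v) = dfa_run D (dfa_run D q u) v"
  by (induction u arbitrary: q) auto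

lemma dfa_run_in_states:
  "wf_dfa D \<Longrightarrow> q \<in> dfa_states D \<Longrightarrow> w \<in> lists (dfa_alphabet D) \<Longrightarrow> dfa_run D q w \<in> dfa_states D"
  by (induction w arbitrary: q) (auto simp: wf_dfa_def)

lemma nfa_step_subset_states:
  "wf_nfa A \<Longrightarrow> S \<subseteq> nfa_states A \<Longrightarrow> a \<in> nfa_alphabet A \<Longrightarrow>
     (\<Union>q\<in>S. nfa_delta A q a) \<subseteq> nfa_states A"
  unfolding wf_nfa_def by blast

lemma nfa_run_subset_states:
  "wf_nfa A \<Longrightarrow> S \<subseteq> nfa_states A \<Longrightarrow> w \<in> lists (nfa_alphabet A) \<Longrightarrow> nfa_run A S w \<subseteq> nfa_states A"
proof (induction w arbitrary: S)
  case (Cons a w)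
  then have "(\<Union>q\<in>S. nfa_delta A q a) \<subseteq> nfa_states A"
    by (intro nfa_step_subset_states) auto
  then show ?case
    using Cons.IH Cons.prems by simp
qed simp

text \<open>DFA states must be natural numbers, so a set of NFA states is encoded as one.\<close>

definition encode_set :: "nat set \<Rightarrow> nat" where
  "encode_set S = to_nat (sorted_list_of_set S)"

lemma inj_on_encode_set: "finite X \<Longrightarrow> inj_on encode_set (Pow X)"
  unfolding inj_on_def encode_set_def
  by (metis PowD finite_subset sorted_list_of_set.set_sorted_key_list_of_set to_nat_split)

lemma set_from_nat_encode_set: "finite S \<Longrightarrow> set (from_nat (encode_set S)) = S"
  unfolding encode_set_def by simp

definition powerset_dfa :: "'a nfa \<Rightarrow> 'a dfa" where
  "powerset_dfa A = \<lparr> dfa_alphabet = nfa_alphabet A,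
     dfa_states = encode_set ` Pow (nfa_states A),
     dfa_init = encode_set {nfa_init A},
     dfa_delta = (\<lambda>q a. encode_set (\<Union>s\<in>set (from_nat q) \<inter> nfa_states A. nfa_delta A s a)),
     dfa_final = encode_set ` {S \<in> Pow (nfa_states A). S \<inter> nfa_final A \<noteq> {}} \<rparr>"

lemma dfa_run_powerset_dfa:
  assumes "wf_nfa A"
  shows "S \<subseteq> nfa_states A \<Longrightarrow> w \<in> lists (nfa_alphabet A) \<Longrightarrow>
     dfa_run (powerset_dfa A) (encode_set S) w = encode_set (nfa_run A S w)"
proof (induction w arbitrary: S)
  case Nil
  then show ?case by simp
next
  case (Cons a w)
  have "finite S"
    using Cons.prems assms finite_subset unfolding wf_nfa_def by blast
  then have "dfa_delta (powerset_dfa A) (encode_set S) a = encode_set (\<Union>q\<in>S. nfa_delta A q a)"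
    using Cons.prems by (simp add: powerset_dfa_def set_from_nat_encode_set Int_absorb2)
  then show ?case
    using Cons nfa_step_subset_states[OF assms] by simp
qed

lemma wf_powerset_dfa: "wf_nfa A \<Longrightarrow> wf_dfa (powerset_dfa A)"
  unfolding wf_dfa_def wf_nfa_def powerset_dfa_def by (auto intro!: imageI)

lemma dfa_lang_powerset_dfa:
  assumes "wf_nfa A"
  shows "dfa_lang (powerset_dfa A) = nfa_lang A"
proof (intro set_eqI)
  fix w
  let ?R = "nfa_run A {nfa_init A} w"
  have fin: "finite (nfa_states A)" and init: "{nfa_init A} \<subseteq> nfa_states A"
    using assms by (auto simp: wf_nfa_def)
  show "w \<in> dfa_lang (powerset_dfa A) \<longleftrightarrow> w \<in> nfa_lang A"
  proof (cases "w \<in> lists (nfa_alphabet A)")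
    case True
    have run: "dfa_run (powerset_dfa A) (dfa_init (powerset_dfa A)) w = encode_set ?R"
      using dfa_run_powerset_dfa[OF assms init True] by (simp add: powerset_dfa_def)
    have "?R \<subseteq> nfa_states A"
      using nfa_run_subset_states[OF assms init True] .
    then have "encode_set ?R \<in> encode_set ` {S \<in> Pow (nfa_states A). S \<inter> nfa_final A \<noteq> {}}
        \<longleftrightarrow> ?R \<in> {S \<in> Pow (nfa_states A). S \<inter> nfa_final A \<noteq> {}}"
      by (intro inj_on_image_mem_iff[OF inj_on_encode_set[OF fin]]) auto
    then show ?thesis
      using True run \<open>?R \<subseteq> nfa_states A\<close>
      by (simp add: dfa_lang_def nfa_lang_def powerset_dfa_def)
  qed (auto simp: dfa_lang_def nfa_lang_def powerset_dfa_def)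
qed

lemma min_dfa_states_attained:
  assumes "wf_nfa A"
  obtains D where "wf_dfa D" "dfa_alphabet D = nfa_alphabet A" "dfa_lang D = nfa_lang A"
    "card (dfa_states D) = min_dfa_states (nfa_alphabet A) (nfa_lang A)"
proof -
  let ?P = "\<lambda>k. \<exists>D. wf_dfa D \<and> dfa_alphabet D = nfa_alphabet A \<and> dfa_lang D = nfa_lang A
                     \<and> card (dfa_states D) = k"
  have "?P (card (dfa_states (powerset_dfa A)))"
    using wf_powerset_dfa dfa_lang_powerset_dfa assms by (fastforce simp: powerset_dfa_def)
  then have "?P (Least ?P)"
    by (rule LeastI)
  then show ?thesis
    using that unfolding min_dfa_states_def by blast
qed

definition dead_state :: "'a dfa \<Rightarrow> nat \<Rightarrow> bool" where
  "dead_state D p \<longleftrightarrow> p \<in> dfa_states D \<and> (\<forall>z\<in>lists (dfa_alphabet D). dfa_run D p z \<notin> dfa_final D)"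

lemma dead_state_ne_init: "dead_state D p \<Longrightarrow> dfa_lang D \<noteq> {} \<Longrightarrow> p \<noteq> dfa_init D"
  unfolding dead_state_def dfa_lang_def by blast

definition delete_state :: "'a dfa \<Rightarrow> nat \<Rightarrow> 'a nfa" where
  "delete_state D p = \<lparr> nfa_alphabet = dfa_alphabet D, nfa_states = dfa_states D - {p},
     nfa_init = dfa_init D,
     nfa_delta = (\<lambda>q a. {dfa_delta D q a} - {p}),
     nfa_final = dfa_final D - {p} \<rparr>"

lemma wf_delete_state:
  "wf_dfa D \<Longrightarrow> p \<noteq> dfa_init D \<Longrightarrow> wf_nfa (delete_state D p)"
  unfolding wf_nfa_def wf_dfa_def delete_state_def by auto

lemma nfa_run_delete_state_subset: "nfa_run (delete_state D p) S w \<subseteq> (\<lambda>q. dfa_run D q w) ` S"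
proof (induction w arbitrary: S)
  case Nil
  then show ?case by simp
next
  case (Cons a w)
  have "nfa_run (delete_state D p) S (a # w)
      = nfa_run (delete_state D p) (\<Union>q\<in>S. {dfa_delta D q a} - {p}) w"
    by (simp add: delete_state_def)
  also have "\<dots> \<subseteq> (\<lambda>q. dfa_run D q w) ` (\<Union>q\<in>S. {dfa_delta D q a} - {p})"
    by (rule Cons.IH)
  also have "\<dots> \<subseteq> (\<lambda>q. dfa_run D q (a # w)) ` S"
    by auto
  finally show ?case .
qed

text \<open>An accepting run never passes through a dead state, so it survives the deletion.\<close>

lemma dfa_run_in_nfa_run_delete_state:
  assumes "dead_state D p"
  shows "q \<noteq> p \<Longrightarrow> w \<in> lists (dfa_alphabet D) \<Longrightarrow> dfa_run D q w \<in> dfa_final D \<Longrightarrow>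
     dfa_run D q w \<in> nfa_run (delete_state D p) {q} w"
proof (induction w arbitrary: q)
  case Nil
  then show ?case by simp
next
  case (Cons a w)
  have "dfa_delta D q a \<noteq> p"
    using Cons.prems assms by (auto simp: dead_state_def)
  then show ?case
    using Cons by (simp add: delete_state_def)
qed

lemma nfa_lang_delete_dead_state:
  assumes "dead_state D p" "p \<noteq> dfa_init D"
  shows "nfa_lang (delete_state D p) = dfa_lang D"
proof (intro set_eqI iffI)
  fix w
  assume "w \<in> nfa_lang (delete_state D p)"
  then obtain r where "r \<in> nfa_run (delete_state D p) {dfa_init D} w" "r \<in> dfa_final D"
    "w \<in> lists (dfa_alphabet D)"
    by (auto simp: nfa_lang_def delete_state_def)
  then show "w \<in> dfa_lang D"
    using nfa_run_delete_state_subset by (fastforce simp: dfa_lang_def)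
next
  fix w
  assume w: "w \<in> dfa_lang D"
  have "dfa_run D (dfa_init D) w \<noteq> p"
    using w assms(1) by (auto simp: dfa_lang_def dead_state_def dest: bspec[of _ _ "[]"])
  moreover have "dfa_run D (dfa_init D) w \<in> nfa_run (delete_state D p) {dfa_init D} w"
    using w dfa_run_in_nfa_run_delete_state[OF assms(1) assms(2)[symmetric]]
    by (simp add: dfa_lang_def)
  ultimately show "w \<in> nfa_lang (delete_state D p)"
    using w by (auto simp: nfa_lang_def dfa_lang_def delete_state_def)
qed

lemma card_dfa_states_gt_minimal_nfa:
  assumes "minimal_nfa A n" "wf_dfa D" "dfa_alphabet D = nfa_alphabet A" "dfa_lang D = nfa_lang A"
    and "dead_state D p" "nfa_lang A \<noteq> {}"
  shows "n + 1 \<le> card (dfa_states D)"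
proof -
  have p_init: "p \<noteq> dfa_init D"
    using assms dead_state_ne_init by metis
  have "n \<le> card (nfa_states (delete_state D p))"
    using assms(1) wf_delete_state[OF assms(2) p_init] nfa_lang_delete_dead_state[OF assms(5) p_init]
    unfolding minimal_nfa_def by (auto simp: assms(3,4) delete_state_def)
  moreover have "p \<in> dfa_states D" "finite (dfa_states D)"
    using assms(2,5) by (auto simp: dead_state_def wf_dfa_def)
  then have "card (nfa_states (delete_state D p)) = card (dfa_states D) - 1"
      and "card (dfa_states D) > 0"
    by (auto simp: delete_state_def card_gt_0_iff)
  ultimately show ?thesis
    by linarith
qed

lemma infix_free_imp_prefix_free: "infix_free L \<Longrightarrow> prefix_free L"
  unfolding infix_free_def prefix_free_def by (metis append_Nil)

lemma prefix_free_dead_state: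
  assumes "wf_dfa D" "prefix_free (dfa_lang D)" "w \<in> dfa_lang D" "a \<in> dfa_alphabet D"
  shows "dead_state D (dfa_delta D (dfa_run D (dfa_init D) w) a)"
proof -
  have "dfa_run D (dfa_init D) w \<in> dfa_states D"
    using assms(1,3) dfa_run_in_states by (auto simp: dfa_lang_def wf_dfa_def)
  moreover have "w @ a # z \<notin> dfa_lang D" for z
    using assms(2,3) unfolding prefix_free_def by blast
  ultimately show ?thesis
    using assms(1,3,4) by (auto simp: dead_state_def dfa_lang_def dfa_run_append wf_dfa_def)
qed

lemma dfa_run_replicate_repeats:
  assumes "wf_dfa D" "q \<in> dfa_states D" "a \<in> dfa_alphabet D"
  obtains i j where "i < j" "dfa_run D q (replicate i a) = dfa_run D q (replicate j a)"
proof -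
  let ?f = "\<lambda>i. dfa_run D q (replicate i a)"
  let ?N = "card (dfa_states D)"
  have img: "?f ` {0..?N} \<subseteq> dfa_states D"
    using assms by (auto intro!: dfa_run_in_states simp: in_lists_conv_set)
  have "\<not> inj_on ?f {0..?N}"
  proof
    assume "inj_on ?f {0..?N}"
    then have "card {0..?N} \<le> ?N"
      using card_inj_on_le img assms(1) by (blast dest: wf_dfa_def[THEN iffD1])
    then show False
      by simp
  qed
  then obtain i j where "i \<noteq> j" "?f i = ?f j"
    unfolding inj_on_def by blast
  then show ?thesis
    by (cases i j rule: linorder_cases) (auto intro: that)
qed

lemma suffix_free_dead_state:
  assumes "wf_dfa D" "suffix_free (dfa_lang D)" "a \<in> dfa_alphabet D"
  obtains p where "dead_state D p"
proof -
  have init: "dfa_init D \<in> dfa_states D"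
    using assms(1) by (simp add: wf_dfa_def)
  obtain i j where ij: "i < j"
    "dfa_run D (dfa_init D) (replicate i a) = dfa_run D (dfa_init D) (replicate j a)"
    using dfa_run_replicate_repeats[OF assms(1) init assms(3)] .
  let ?p = "dfa_run D (dfa_init D) (replicate i a)"
  have "dfa_run D ?p z \<notin> dfa_final D" if z: "z \<in> lists (dfa_alphabet D)" for z
  proof
    assume acc: "dfa_run D ?p z \<in> dfa_final D"
    have "replicate i a @ z \<in> dfa_lang D" "replicate j a @ z \<in> dfa_lang D"
      using acc z assms(3) ij(2) by (auto simp: dfa_lang_def dfa_run_append)
    moreover have "replicate j a @ z = replicate (j - i) a @ replicate i a @ z"
      using ij(1) by (simp flip: replicate_add)
    moreover have "replicate (j - i) a \<noteq> []"
      using ij(1) by simp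
    ultimately show False
      using assms(2) unfolding suffix_free_def by auto
  qed
  moreover have "?p \<in> dfa_states D"
    using assms(1,3) init by (auto intro!: dfa_run_in_states simp: in_lists_conv_set)
  ultimately show ?thesis
    using that by (auto simp: dead_state_def)
qed

theorem mainTheorem4:
  fixes A :: "'a nfa" and n :: nat
  assumes "nfa_alphabet A \<noteq> {}"
    and "minimal_nfa A n"
    and "nfa_lang A \<noteq> {}"
    and "prefix_free (nfa_lang A) \<or> suffix_free (nfa_lang A) \<or> infix_free (nfa_lang A)"
  shows "n + 1 \<le> min_dfa_states (nfa_alphabet A) (nfa_lang A)"
proof -
  obtain D where D: "wf_dfa D" "dfa_alphabet D = nfa_alphabet A" "dfa_lang D = nfa_lang A"
    "card (dfa_states D) = min_dfa_states (nfa_alphabet A) (nfa_lang A)"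
    using min_dfa_states_attained assms(2) unfolding minimal_nfa_def by blast
  obtain a w where a: "a \<in> dfa_alphabet D" and w: "w \<in> dfa_lang D"
    using assms(1,3) D(2,3) by blast
  have "prefix_free (dfa_lang D) \<or> suffix_free (dfa_lang D)"
    using assms(4) D(3) infix_free_imp_prefix_free by auto
  then obtain p where "dead_state D p"
    using prefix_free_dead_state[OF D(1) _ w a] suffix_free_dead_state[OF D(1) _ a] by blast
  then show ?thesis
    using card_dfa_states_gt_minimal_nfa[OF assms(2) D(1-3)] assms(3) D(4) by simp
qed

end
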